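(* Let $(\mathcal{X},d)$ be a Polish metric space and let $(X_N)_{N\in\mathbb{N}}$ be a Markov chain on $\mathcal{X}$ with transition kernel $(P_x)_{x\in\mathcal{X}}$, where $x\mapsto P_x$ is measurable and each $P_x$ has finite first moment. Assume there exists $\kappa>0$ such that $W_1(P_x,P_y)\le(1-\kappa)\,d(x,y)$ for all $x,y\in\mathcal{X}$, and let $\pi$ be the invariant probability measure. Let $T\ge1$, $T_0\ge0$ be integers and $\hat\pi(f):=\frac1T\sum_{k=T_0+1}^{T_0+T}f(X_k)$. Assume $\sup_{x\in\mathcal{X}}\sigma(x)^2/n_x<\infty$. Then for every Lipschitz $f:\mathcal{X}\to\mathbb{R}$ and every starting point $x\in\mathcal{X}$, \[ \operatorname{Var}_x\hat\pi(f)\le \begin{cases} \dfrac{\|f\|_{\mathrm{Lip}}^2}{\kappa T}\sup_{y\in\mathcal{X}}\dfrac{\sigma(y)^2}{n_y\kappa}, & \text{if } T_0=0,\\[2mm] \dfrac{\|f\|_{\mathrm{Lip}}^2}{\kappa T}\Big(1+\dfrac{1}{\kappa T}\Big)\sup_{y\in\mathcal{X}}\dfrac{\sigma(y)^2}{n_y\kappa}, & \text{otherwise.} \end{cases} \]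
   Context: $W_1$ is the $L^1$ Wasserstein distance (infimum over couplings of $\int d(x,y)\,\xi(dx,dy)$). $\operatorname{Var}_x$ is the variance for the chain started at $X_0=x$. The coarse diffusion constant is $\sigma(x)^2:=\frac12\iint d(y,z)^2P_x(dy)P_x(dz)$, and the local dimension is $n_x:=\inf\{\iint d(y,z)^2P_x(dy)P_x(dz)\,/\,\iint|f(y)-f(z)|^2P_x(dy)P_x(dz)\ :\ f:\mathcal{X}\to\mathbb{R}\ 1\text{-Lipschitz}\}$ ($\ge1$). $\|f\|_{\mathrm{Lip}}:=\sup_{x\ne y}|f(x)-f(y)|/d(x,y)$. *)

theory Defs
  imports "HOL-Probability.Probability"
begin

definition couplings :: "'a::metric_space measure \<Rightarrow> 'a measure \<Rightarrow> ('a \<times> 'a) measure set" where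
  "couplings \<mu> \<nu> = {\<xi>. prob_space \<xi> \<and> sets \<xi> = sets (borel \<Otimes>\<^sub>M borel)
      \<and> distr \<xi> borel fst = \<mu> \<and> distr \<xi> borel snd = \<nu>}"

definition W1 :: "'a::metric_space measure \<Rightarrow> 'a measure \<Rightarrow> ennreal" where
  "W1 \<mu> \<nu> = (INF \<xi> \<in> couplings \<mu> \<nu>. \<integral>\<^sup>+ p. ennreal (dist (fst p) (snd p)) \<partial>\<xi>)"

definition lip_norm :: "('a::metric_space \<Rightarrow> real) \<Rightarrow> real" where
  "lip_norm f = (SUP p \<in> {p. fst p \<noteq> snd p}. dist (f (fst p)) (f (snd p)) / dist (fst p) (snd p))"

definition dsq :: "('a::metric_space \<Rightarrow> 'a measure) \<Rightarrow> 'a \<Rightarrow> ennreal" where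
  "dsq K x = (\<integral>\<^sup>+ y. \<integral>\<^sup>+ z. ennreal ((dist y z)\<^sup>2) \<partial>K x \<partial>K x)"

definition fsq :: "('a::metric_space \<Rightarrow> 'a measure) \<Rightarrow> ('a \<Rightarrow> real) \<Rightarrow> 'a \<Rightarrow> ennreal" where
  "fsq K f x = (\<integral>\<^sup>+ y. \<integral>\<^sup>+ z. ennreal ((f y - f z)\<^sup>2) \<partial>K x \<partial>K x)"

definition coarse_sigma2 :: "('a::metric_space \<Rightarrow> 'a measure) \<Rightarrow> 'a \<Rightarrow> ennreal" where
  "coarse_sigma2 K x = dsq K x / 2"

text \<open>Local dimension n_x: infimum over 1-Lipschitz f of the ratio; a ratio with zero
  denominator is taken to be infinite (so e.g. a Dirac kernel has n_x = \<infinity>, sigma^2/n_x = 0).\<close>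
definition local_dim :: "('a::metric_space \<Rightarrow> 'a measure) \<Rightarrow> 'a \<Rightarrow> ennreal" where
  "local_dim K x = (INF f \<in> {f. 1-lipschitz_on UNIV f}.
      (if fsq K f x = 0 then \<top> else dsq K x / fsq K f x))"

text \<open>Law of the trajectory (X_0, ..., X_n) of the chain with kernel K started at X_0 = x,
  as a measure on functions extensional on {0..n}.\<close>
fun path :: "('a::metric_space \<Rightarrow> 'a measure) \<Rightarrow> 'a \<Rightarrow> nat \<Rightarrow> (nat \<Rightarrow> 'a) measure" where
  "path K x 0 = return (PiM {0} (\<lambda>_. borel)) (\<lambda>i\<in>{0}. x)"
| "path K x (Suc n) = path K x n \<bind>
     (\<lambda>\<omega>. distr (K (\<omega> n)) (PiM {0..Suc n} (\<lambda>_. borel)) (\<lambda>y. (restrict \<omega> {0..n})(Suc n := y)))"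

definition var :: "'b measure \<Rightarrow> ('b \<Rightarrow> real) \<Rightarrow> real" where
  "var M g = (\<integral>\<omega>. (g \<omega> - (\<integral>\<omega>'. g \<omega>' \<partial>M))\<^sup>2 \<partial>M)"

end

theory Submission
  imports Defs
begin

text \<open>
  The variance of the empirical mean is controlled through a martingale decomposition along the
  chain. Integrating out the last step replaces a term g(X_{n+1}) by its one-step average
  (P g)(X_n). By the W_1-contraction, P g is (1 - \<kappa>) times as Lipschitz as g, and the price
  is the conditional variance of g under P_{X_n}. As the double integral of (g y - g z)^2 is
  twice that variance, the local dimension bounds it by Lip(g)^2 \<sigma>(X_n)^2 / n_{X_n}.
  Iterating, the j-th increment has Lipschitz constant \<Sum>_{k \<ge> j} (1 - \<kappa>)^(k - j) c_k
  (the discounted tail of the weights c), and for c_k = Lip(f) / T on the averaging window the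
  squares of these geometric tails sum to the stated bound.
\<close>

lemma (in prob_space) nn_integral_square_shift:
  fixes X :: "'a \<Rightarrow> real"
  assumes X: "integrable M X" and X2: "integrable M (\<lambda>x. (X x)\<^sup>2)"
  shows "(\<integral>\<^sup>+x. ennreal ((t + X x)\<^sup>2) \<partial>M) = ennreal ((t + expectation X)\<^sup>2 + var M X)"
proof -
  have expand: "(\<lambda>x. (t + X x)\<^sup>2) = (\<lambda>x. t\<^sup>2 + (2 * t) * X x + (X x)\<^sup>2)"
    by (auto simp: power2_eq_square algebra_simps)
  have "integrable M (\<lambda>x. (t + X x)\<^sup>2)"
    unfolding expand using X X2 by auto
  then have "(\<integral>\<^sup>+x. ennreal ((t + X x)\<^sup>2) \<partial>M) = ennreal (expectation (\<lambda>x. (t + X x)\<^sup>2))"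
    by (intro nn_integral_eq_integral) auto
  also have "expectation (\<lambda>x. (t + X x)\<^sup>2) = (t + expectation X)\<^sup>2 + var M X"
    unfolding expand var_def variance_eq[OF X X2] using X X2
    by (simp add: prob_space power2_eq_square algebra_simps)
  finally show ?thesis .
qed

lemma (in prob_space) var_le_nn_integral_square:
  fixes X :: "'a \<Rightarrow> real"
  assumes X: "X \<in> borel_measurable M"
  shows "ennreal (var M X) \<le> (\<integral>\<^sup>+x. ennreal ((X x - a)\<^sup>2) \<partial>M)"
proof (cases "(\<integral>\<^sup>+x. ennreal ((X x - a)\<^sup>2) \<partial>M) = \<top>")
  case False
  let ?Y = "\<lambda>x. X x - a"
  have Y2: "integrable M (\<lambda>x. (?Y x)\<^sup>2)"
    using X False by (intro integrableI_nonneg) (auto simp: top.not_eq_extremum)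
  have Y: "integrable M ?Y"
    using X by (intro square_integrable_imp_integrable[OF _ Y2] borel_measurable_diff) simp_all
  have "var M ?Y = var M X"
  proof -
    have "integrable M X"
      using Bochner_Integration.integrable_add[OF Y integrable_const[of a]] by simp
    then have "expectation ?Y = expectation X - a"
      by (simp add: prob_space)
    then show ?thesis
      by (simp add: var_def)
  qed
  moreover have "(\<integral>\<^sup>+x. ennreal ((X x - a)\<^sup>2) \<partial>M) = ennreal ((0 + expectation ?Y)\<^sup>2 + var M ?Y)"
    using nn_integral_square_shift[OF Y Y2, of 0] by simp
  ultimately show ?thesis
    by (simp add: ennreal_leI)
qed simp

lemma (in prob_space) double_nn_integral_square_diff:
  fixes X :: "'a \<Rightarrow> real"
  assumes X: "integrable M X" and X2: "integrable M (\<lambda>x. (X x)\<^sup>2)"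
  shows "(\<integral>\<^sup>+x. \<integral>\<^sup>+y. ennreal ((X x - X y)\<^sup>2) \<partial>M \<partial>M) = ennreal (2 * var M X)"
proof -
  let ?m = "expectation X"
  have inner: "(\<integral>\<^sup>+y. ennreal ((X x - X y)\<^sup>2) \<partial>M) = ennreal ((X x - ?m)\<^sup>2 + var M X)" for x
  proof -
    have "(\<integral>\<^sup>+y. ennreal ((X x - X y)\<^sup>2) \<partial>M) = (\<integral>\<^sup>+y. ennreal ((- X x + X y)\<^sup>2) \<partial>M)"
      by (intro nn_integral_cong) (simp add: power2_commute)
    also have "\<dots> = ennreal ((X x - ?m)\<^sup>2 + var M X)"
      by (subst nn_integral_square_shift[OF X X2]) (simp add: power2_eq_square algebra_simps)
    finally show ?thesis .
  qed
  have V: "integrable M (\<lambda>x. (X x - ?m)\<^sup>2)"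
    using X X2 by (simp add: power2_diff)
  have "(\<integral>\<^sup>+x. \<integral>\<^sup>+y. ennreal ((X x - X y)\<^sup>2) \<partial>M \<partial>M)
      = ennreal (expectation (\<lambda>x. (X x - ?m)\<^sup>2 + var M X))"
    unfolding inner using V by (intro nn_integral_eq_integral) (auto simp: var_def)
  also have "\<dots> = ennreal (2 * var M X)"
    using V by (simp add: var_def prob_space)
  finally show ?thesis .
qed

lemma lipschitz_on_borel_measurable:
  fixes h :: "'a::metric_space \<Rightarrow> real"
  shows "C-lipschitz_on UNIV h \<Longrightarrow> h \<in> borel_measurable borel"
  by (intro borel_measurable_continuous_onI lipschitz_on_continuous_on)

text \<open>The absolute value guards against the junk value of the empty supremum on a space with
  at most one point.\<close>

lemma lipschitz_on_lip_norm:
  fixes f :: "'a::metric_space \<Rightarrow> real"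
  assumes "C-lipschitz_on UNIV f"
  shows "\<bar>lip_norm f\<bar>-lipschitz_on UNIV f"
proof (rule lipschitz_onI)
  fix a b :: 'a
  show "dist (f a) (f b) \<le> \<bar>lip_norm f\<bar> * dist a b"
  proof (cases "a = b")
    case False
    have bdd: "bdd_above ((\<lambda>p. dist (f (fst p)) (f (snd p)) / dist (fst p) (snd p)) ` {p. fst p \<noteq> snd p})"
    proof (rule bdd_aboveI2)
      fix p :: "'a \<times> 'a" assume "p \<in> {p. fst p \<noteq> snd p}"
      then show "dist (f (fst p)) (f (snd p)) / dist (fst p) (snd p) \<le> C"
        using lipschitz_onD[OF assms, of "fst p" "snd p"] by (simp add: divide_le_eq)
    qed
    have "dist (f a) (f b) / dist a b \<le> lip_norm f"
      unfolding lip_norm_def using cSUP_upper[OF _ bdd, of "(a, b)"] False by simp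
    then have "dist (f a) (f b) \<le> lip_norm f * dist a b"
      using False by (simp add: divide_le_eq)
    also have "\<dots> \<le> \<bar>lip_norm f\<bar> * dist a b"
      by (intro mult_right_mono) auto
    finally show ?thesis .
  qed simp
qed simp

locale metric_prob_space = prob_space M for M :: "'a::metric_space measure" +
  assumes sets_eq_borel: "sets M = sets borel"
begin

lemma borel_measurable_borel: "h \<in> borel_measurable borel \<Longrightarrow> h \<in> borel_measurable M"
  using measurable_cong_sets[OF sets_eq_borel refl] by blast

lemma lipschitz_integrable:
  fixes h :: "'a \<Rightarrow> real"
  assumes h: "C-lipschitz_on UNIV h" and moment: "(\<integral>\<^sup>+z. ennreal (dist y z) \<partial>M) < \<top>"
  shows "integrable M h"
proof (rule Bochner_Integration.integrable_bound)
  have "(\<lambda>z. dist y z) \<in> borel_measurable borel"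
    by (intro borel_measurable_continuous_onI continuous_intros)
  with moment have "integrable M (\<lambda>z. dist y z)"
    by (intro integrableI_bounded borel_measurable_borel) auto
  then show "integrable M (\<lambda>z. \<bar>h y\<bar> + C * dist y z)"
    by auto
  show "h \<in> borel_measurable M"
    by (rule borel_measurable_borel[OF lipschitz_on_borel_measurable[OF h]])
  have "\<bar>h z\<bar> \<le> \<bar>h y\<bar> + C * dist y z" for z
    using lipschitz_onD[OF h, of y z] by (auto simp: dist_real_def)
  then show "AE z in M. norm (h z) \<le> norm (\<bar>h y\<bar> + C * dist y z)"
    by (intro AE_I2) (smt (verit) real_norm_def)
qed

lemma lipschitz_square_integrable:
  fixes h :: "'a \<Rightarrow> real"
  assumes h: "C-lipschitz_on UNIV h"
    and moment: "(\<integral>\<^sup>+y. \<integral>\<^sup>+z. ennreal ((dist y z)\<^sup>2) \<partial>M \<partial>M) < \<top>"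
  shows "integrable M (\<lambda>z. (h z)\<^sup>2)"
proof -
  have "\<exists>y. (\<integral>\<^sup>+z. ennreal ((dist y z)\<^sup>2) \<partial>M) < \<top>"
  proof (rule ccontr)
    assume "\<nexists>y. (\<integral>\<^sup>+z. ennreal ((dist y z)\<^sup>2) \<partial>M) < \<top>"
    then have "(\<integral>\<^sup>+y. \<integral>\<^sup>+z. ennreal ((dist y z)\<^sup>2) \<partial>M \<partial>M) = (\<integral>\<^sup>+y. \<top> \<partial>M)"
      using top.not_eq_extremum by (intro nn_integral_cong) blast
    with moment show False
      by (simp add: emeasure_space_1)
  qed
  then obtain y where y: "(\<integral>\<^sup>+z. ennreal ((dist y z)\<^sup>2) \<partial>M) < \<top>"
    by blast
  show ?thesis
  proof (rule Bochner_Integration.integrable_bound)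
    have "(\<lambda>z. (dist y z)\<^sup>2) \<in> borel_measurable borel"
      by (intro borel_measurable_continuous_onI continuous_intros)
    with y have "integrable M (\<lambda>z. (dist y z)\<^sup>2)"
      by (intro integrableI_nonneg borel_measurable_borel) auto
    then show "integrable M (\<lambda>z. 2 * (h y)\<^sup>2 + 2 * C\<^sup>2 * (dist y z)\<^sup>2)"
      by auto
    show "(\<lambda>z. (h z)\<^sup>2) \<in> borel_measurable M"
      using borel_measurable_borel[OF lipschitz_on_borel_measurable[OF h]] by measurable
    have "(h z)\<^sup>2 \<le> 2 * (h y)\<^sup>2 + 2 * C\<^sup>2 * (dist y z)\<^sup>2" for z
    proof -
      have "\<bar>h z\<bar> \<le> \<bar>h y\<bar> + C * dist y z"
        using lipschitz_onD[OF h, of y z] by (auto simp: dist_real_def)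
      then have "(h z)\<^sup>2 \<le> (\<bar>h y\<bar> + C * dist y z)\<^sup>2"
        by (metis abs_ge_zero power2_abs power_mono)
      also have "\<dots> \<le> 2 * (h y)\<^sup>2 + 2 * C\<^sup>2 * (dist y z)\<^sup>2"
        using sum_squares_bound[of "\<bar>h y\<bar>" "C * dist y z"]
        by (simp add: power2_sum power_mult_distrib)
      finally show ?thesis .
    qed
    then show "AE z in M. norm ((h z)\<^sup>2) \<le> norm (2 * (h y)\<^sup>2 + 2 * C\<^sup>2 * (dist y z)\<^sup>2)"
      by (intro AE_I2) (smt (verit) real_norm_def zero_le_power2)
  qed
qed

end

lemma ennreal_le_divide_swap:
  fixes a b c :: ennreal
  assumes "0 < a" "a < \<top>" "0 < b" "b < \<top>" "c \<le> a / b"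
  shows "b \<le> a / c"
proof -
  obtain r s where rs: "a = ennreal r" "b = ennreal s" "0 < r" "0 < s"
    using assms(1-4) by (cases a; cases b) auto
  show ?thesis
  proof (cases "c = 0")
    case False
    from assms(5) obtain t where t: "c = ennreal t" "0 < t" "t \<le> r / s"
      using False rs by (cases c) (auto simp: divide_ennreal ennreal_le_iff2 top_unique)
    then have "s \<le> r / t"
      using rs by (simp add: field_simps)
    then show ?thesis
      using rs t by (simp add: divide_ennreal)
  qed (use rs in \<open>simp add: ennreal_divide_zero\<close>)
qed

lemma fsq_le_dsq_div_local_dim:
  assumes h: "1-lipschitz_on UNIV h" and finite: "dsq K y < \<top>"
  shows "fsq K h y \<le> dsq K y / local_dim K y"
proof (cases "fsq K h y = 0")
  case False
  have "local_dim K y \<le> (if fsq K h y = 0 then \<top> else dsq K y / fsq K h y)"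
    unfolding local_dim_def by (rule INF_lower) (simp add: h)
  with False have ld: "local_dim K y \<le> dsq K y / fsq K h y"
    by simp
  have le: "fsq K h y \<le> dsq K y"
    unfolding fsq_def dsq_def
  proof (intro nn_integral_mono ennreal_leI)
    fix a b
    have "\<bar>h a - h b\<bar> \<le> dist a b"
      using lipschitz_onD[OF h, of a b] by (simp add: dist_real_def)
    then show "(h a - h b)\<^sup>2 \<le> (dist a b)\<^sup>2"
      by (metis abs_ge_zero power2_abs power_mono)
  qed
  from False have pos: "0 < fsq K h y"
    by (simp add: zero_less_iff_neq_zero)
  show ?thesis
    using order.strict_trans2[OF pos le] finite pos order.strict_trans1[OF le finite] ld
    by (rule ennreal_le_divide_swap)
qed simp

lemma integral_diff_le_W1:
  fixes h :: "'a::metric_space \<Rightarrow> real"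
  assumes h: "1-lipschitz_on UNIV h" and int_\<mu>: "integrable \<mu> h" and int_\<nu>: "integrable \<nu> h"
  shows "ennreal \<bar>(\<integral>w. h w \<partial>\<mu>) - (\<integral>w. h w \<partial>\<nu>)\<bar> \<le> W1 \<mu> \<nu>"
  unfolding W1_def
proof (rule INF_greatest)
  fix \<xi> assume "\<xi> \<in> couplings \<mu> \<nu>"
  then have sets_\<xi>: "sets \<xi> = sets (borel \<Otimes>\<^sub>M borel)"
    and \<mu>: "distr \<xi> borel fst = \<mu>" and \<nu>: "distr \<xi> borel snd = \<nu>"
    by (auto simp: couplings_def)
  have fst: "fst \<in> \<xi> \<rightarrow>\<^sub>M (borel :: 'a measure)" and snd: "snd \<in> \<xi> \<rightarrow>\<^sub>M (borel :: 'a measure)"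
    using measurable_cong_sets[OF sets_\<xi> refl] by auto
  have hb: "h \<in> borel_measurable borel"
    by (rule lipschitz_on_borel_measurable[OF h])
  have int_fst: "integrable \<xi> (\<lambda>p. h (fst p))" and int_snd: "integrable \<xi> (\<lambda>p. h (snd p))"
    using integrable_distr_eq[OF fst hb] integrable_distr_eq[OF snd hb] int_\<mu> int_\<nu> \<mu> \<nu> by auto
  have "(\<integral>w. h w \<partial>\<mu>) - (\<integral>w. h w \<partial>\<nu>) = (\<integral>p. h (fst p) - h (snd p) \<partial>\<xi>)"
    using integral_distr[OF fst hb] integral_distr[OF snd hb] int_fst int_snd \<mu> \<nu> by simp
  then have "\<bar>(\<integral>w. h w \<partial>\<mu>) - (\<integral>w. h w \<partial>\<nu>)\<bar> \<le> (\<integral>p. \<bar>h (fst p) - h (snd p)\<bar> \<partial>\<xi>)"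
    by (simp add: integral_abs_bound)
  then have "ennreal \<bar>(\<integral>w. h w \<partial>\<mu>) - (\<integral>w. h w \<partial>\<nu>)\<bar> \<le> (\<integral>\<^sup>+p. ennreal \<bar>h (fst p) - h (snd p)\<bar> \<partial>\<xi>)"
    using int_fst int_snd by (simp add: nn_integral_eq_integral ennreal_leI)
  also have "\<dots> \<le> (\<integral>\<^sup>+p. ennreal (dist (fst p) (snd p)) \<partial>\<xi>)"
    using lipschitz_onD[OF h] by (intro nn_integral_mono ennreal_leI) (simp add: dist_real_def)
  finally show "ennreal \<bar>(\<integral>w. h w \<partial>\<mu>) - (\<integral>w. h w \<partial>\<nu>)\<bar> \<le> (\<integral>\<^sup>+p. ennreal (dist (fst p) (snd p)) \<partial>\<xi>)" .
qed

lemma extend_path_measurable: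
  assumes "sets M = sets (borel :: 'a::topological_space measure)"
  shows "(\<lambda>y. (restrict \<omega> {0..n})(Suc n := y)) \<in> M \<rightarrow>\<^sub>M PiM {0..Suc n} (\<lambda>_. (borel :: 'a measure))"
proof (rule measurable_PiM_single')
  show "(\<lambda>y. ((restrict \<omega> {0..n})(Suc n := y)) i) \<in> M \<rightarrow>\<^sub>M borel" if "i \<in> {0..Suc n}" for i
    using that by (cases "i = Suc n") (auto simp: measurable_cong_sets[OF assms refl])
qed (auto simp: PiE_def extensional_def)

lemma path_sum_measurable:
  fixes g :: "nat \<Rightarrow> 'a::metric_space \<Rightarrow> real"
  assumes "\<forall>k\<le>n. (c k)-lipschitz_on UNIV (g k)"
  shows "(\<lambda>\<omega>. \<Sum>k\<le>n. g k (\<omega> k)) \<in> borel_measurable (PiM {0..n} (\<lambda>_. borel))"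
proof (rule borel_measurable_sum)
  fix k assume "k \<in> {..n}"
  then have k: "k \<in> {0..n}" and "(c k)-lipschitz_on UNIV (g k)"
    using assms by auto
  then show "(\<lambda>\<omega>. g k (\<omega> k)) \<in> borel_measurable (PiM {0..n} (\<lambda>_. borel))"
    using measurable_compose[OF measurable_component_singleton[OF k] lipschitz_on_borel_measurable]
    by blast
qed

locale markov_kernel =
  fixes K :: "'a::metric_space \<Rightarrow> 'a measure"
  assumes K_meas: "K \<in> borel \<rightarrow>\<^sub>M prob_algebra borel"
begin

lemma metric_prob_space_K: "metric_prob_space (K y)"
proof -
  have "prob_space (K y)" "sets (K y) = sets borel"
    using measurable_space[OF K_meas, of y] by (simp_all add: space_prob_algebra)
  then show ?thesis
    by (intro metric_prob_space.intro metric_prob_space_axioms.intro)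
qed

lemma var_le_coarse_sigma2_div_local_dim:
  fixes h :: "'a \<Rightarrow> real"
  assumes h: "C-lipschitz_on UNIV h" and sigma: "coarse_sigma2 K y < \<top>"
  shows "ennreal (var (K y) h) \<le> ennreal (C\<^sup>2) * (coarse_sigma2 K y / local_dim K y)"
proof -
  interpret metric_prob_space "K y"
    by (rule metric_prob_space_K)
  show ?thesis
  proof (cases "C = 0")
    case True
    define c where "c = h y"
    have "h = (\<lambda>_. c)"
      using lipschitz_onD[OF h, of _ y] True by (auto simp: c_def)
    then show ?thesis
      by (simp add: var_def prob_space)
  next
    case False
    then have C: "0 < C"
      using lipschitz_on_nonneg[OF h] by simp
    have dsq: "dsq K y < \<top>"
      using sigma ennreal_divide_eq_top_iff[of "dsq K y" 2] by (auto simp: coarse_sigma2_def less_top)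
    define h1 where "h1 z = h z / C" for z
    have h1: "1-lipschitz_on UNIV h1"
      using lipschitz_on_cmult_real_nonneg[OF h, of "1 / C"] C by (simp add: h1_def)
    have sq1: "integrable (K y) (\<lambda>z. (h1 z)\<^sup>2)"
      by (rule lipschitz_square_integrable[OF h1 dsq[unfolded dsq_def]])
    have int1: "integrable (K y) h1"
      using borel_measurable_borel[OF lipschitz_on_borel_measurable[OF h1]]
      by (intro square_integrable_imp_integrable[OF _ sq1])
    have "ennreal (var (K y) h1) = ennreal (2 * var (K y) h1) / 2"
      using variance_positive[of h1] by (simp add: var_def ennreal_divide_numeral)
    also have "ennreal (2 * var (K y) h1) = fsq K h1 y"
      by (simp add: fsq_def double_nn_integral_square_diff[OF int1 sq1])
    also have "fsq K h1 y / 2 \<le> dsq K y / local_dim K y / 2"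
      by (intro divide_right_mono_ennreal fsq_le_dsq_div_local_dim[OF h1 dsq])
    also have "\<dots> = coarse_sigma2 K y / local_dim K y"
      by (simp add: coarse_sigma2_def divide_ennreal_def ac_simps)
    finally have "ennreal (var (K y) h1) \<le> coarse_sigma2 K y / local_dim K y" .
    moreover have "var (K y) h = C\<^sup>2 * var (K y) h1"
      using C by (simp add: var_def h1_def power_divide diff_divide_distrib[symmetric])
    ultimately show ?thesis
      using C by (simp add: ennreal_mult' mult_left_mono)
  qed
qed

lemma nn_integral_square_shift_le:
  fixes h :: "'a \<Rightarrow> real"
  assumes h: "C-lipschitz_on UNIV h" and sigma: "coarse_sigma2 K y < \<top>"
  shows "(\<integral>\<^sup>+z. ennreal ((t + h z)\<^sup>2) \<partial>K y)
    \<le> ennreal ((t + (\<integral>z. h z \<partial>K y))\<^sup>2) + ennreal (C\<^sup>2) * (coarse_sigma2 K y / local_dim K y)"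
proof -
  interpret metric_prob_space "K y"
    by (rule metric_prob_space_K)
  have dsq: "dsq K y < \<top>"
    using sigma ennreal_divide_eq_top_iff[of "dsq K y" 2] by (auto simp: coarse_sigma2_def less_top)
  have sq: "integrable (K y) (\<lambda>z. (h z)\<^sup>2)"
    by (rule lipschitz_square_integrable[OF h dsq[unfolded dsq_def]])
  have int: "integrable (K y) h"
    using borel_measurable_borel[OF lipschitz_on_borel_measurable[OF h]]
    by (intro square_integrable_imp_integrable[OF _ sq])
  have "(\<integral>\<^sup>+z. ennreal ((t + h z)\<^sup>2) \<partial>K y) = ennreal ((t + (\<integral>z. h z \<partial>K y))\<^sup>2) + ennreal (var (K y) h)"
    using variance_positive[of h] by (simp add: nn_integral_square_shift[OF int sq] var_def ennreal_plus)
  also have "\<dots> \<le> ennreal ((t + (\<integral>z. h z \<partial>K y))\<^sup>2) + ennreal (C\<^sup>2) * (coarse_sigma2 K y / local_dim K y)"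
    by (intro add_left_mono var_le_coarse_sigma2_div_local_dim[OF h sigma])
  finally show ?thesis .
qed

lemma path_step_measurable:
  "(\<lambda>\<omega>. distr (K (\<omega> n)) (PiM {0..Suc n} (\<lambda>_. borel)) (\<lambda>y. (restrict \<omega> {0..n})(Suc n := y)))
     \<in> PiM {0..n} (\<lambda>_. borel) \<rightarrow>\<^sub>M prob_algebra (PiM {0..Suc n} (\<lambda>_. borel))"
proof (rule measurable_distr_prob_space2)
  show "(\<lambda>\<omega>. K (\<omega> n)) \<in> PiM {0..n} (\<lambda>_. borel) \<rightarrow>\<^sub>M prob_algebra borel"
    using K_meas by measurable
  show "(\<lambda>(\<omega>, y). (restrict \<omega> {0..n})(Suc n := y))
      \<in> PiM {0..n} (\<lambda>_. borel) \<Otimes>\<^sub>M borel \<rightarrow>\<^sub>M PiM {0..Suc n} (\<lambda>_. borel)"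
  proof (rule measurable_PiM_single')
    fix i assume i: "i \<in> {0..Suc n}"
    show "(\<lambda>p. (case p of (\<omega>, y) \<Rightarrow> (restrict \<omega> {0..n})(Suc n := y)) i)
        \<in> PiM {0..n} (\<lambda>_. borel) \<Otimes>\<^sub>M borel \<rightarrow>\<^sub>M borel"
    proof (cases "i = Suc n")
      case False
      with i have "i \<in> {0..n}"
        by auto
      then have "(\<lambda>p. fst p i) \<in> PiM {0..n} (\<lambda>_. borel) \<Otimes>\<^sub>M (borel :: 'a measure) \<rightarrow>\<^sub>M borel"
        by measurable
      then show ?thesis
        using False \<open>i \<in> {0..n}\<close> by (simp add: case_prod_beta cong: measurable_cong)
    qed (simp add: case_prod_beta)
  qed (auto simp: PiE_def extensional_def space_pair_measure)
qed

lemma path_in_prob_algebra: "path K x n \<in> space (prob_algebra (PiM {0..n} (\<lambda>_. borel)))"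
proof (induction n)
  case 0
  show ?case
    by (auto simp: space_prob_algebra space_PiM intro!: prob_space_return)
next
  case (Suc n)
  show ?case
    unfolding path.simps(2) space_prob_algebra
    using prob_space_bind'[OF Suc path_step_measurable] sets_bind'[OF Suc path_step_measurable]
    by blast
qed

lemma prob_space_path: "prob_space (path K x n)"
  and sets_path: "sets (path K x n) = sets (PiM {0..n} (\<lambda>_. borel))"
  using path_in_prob_algebra[of x n] by (auto simp: space_prob_algebra)

lemma nn_integral_path_Suc:
  assumes F: "F \<in> borel_measurable (PiM {0..Suc n} (\<lambda>_. borel))"
  shows "(\<integral>\<^sup>+\<omega>. F \<omega> \<partial>path K x (Suc n))
    = (\<integral>\<^sup>+\<omega>. \<integral>\<^sup>+y. F ((restrict \<omega> {0..n})(Suc n := y)) \<partial>K (\<omega> n) \<partial>path K x n)"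
proof -
  have step: "(\<lambda>\<omega>. distr (K (\<omega> n)) (PiM {0..Suc n} (\<lambda>_. borel)) (\<lambda>y. (restrict \<omega> {0..n})(Suc n := y)))
      \<in> path K x n \<rightarrow>\<^sub>M subprob_algebra (PiM {0..Suc n} (\<lambda>_. borel))"
    using measurable_prob_algebraD[OF path_step_measurable] measurable_cong_sets[OF sets_path refl]
    by blast
  have sets_K: "sets (K y) = sets borel" for y
    using metric_prob_space.sets_eq_borel[OF metric_prob_space_K] .
  show ?thesis
    unfolding path.simps(2) nn_integral_bind[OF F step]
    by (intro nn_integral_cong nn_integral_distr extend_path_measurable sets_K)
      (simp add: measurable_distr_eq1 F)
qed

end

definition discounted_tail :: "real \<Rightarrow> (nat \<Rightarrow> real) \<Rightarrow> nat \<Rightarrow> nat \<Rightarrow> real" where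
  "discounted_tail q c n j = (\<Sum>k\<in>{j..n}. q ^ (k - j) * c k)"

lemma discounted_tail_Suc:
  assumes "j \<le> n"
  shows "discounted_tail q (c(n := c n + q * c (Suc n))) n j = discounted_tail q c (Suc n) j"
proof -
  have "discounted_tail q (c(n := c n + q * c (Suc n))) n j
      = (\<Sum>k\<in>{j..n}. q ^ (k - j) * c k + (if k = n then q ^ (k - j) * (q * c (Suc n)) else 0))"
    unfolding discounted_tail_def by (intro sum.cong) (auto simp: algebra_simps)
  also have "\<dots> = (\<Sum>k\<in>{j..n}. q ^ (k - j) * c k) + q ^ (Suc n - j) * c (Suc n)"
    using assms by (simp add: sum.distrib Suc_diff_le)
  also have "\<dots> = discounted_tail q c (Suc n) j"
    using assms by (simp add: discounted_tail_def sum.cl_ivl_Suc)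
  finally show ?thesis .
qed

lemma geometric_tail_sum_le:
  fixes q :: real
  assumes "0 \<le> q"
  shows "(1 - q) * (\<Sum>k\<in>{m..n}. q ^ (k - m)) \<le> 1"
proof (cases "m \<le> n")
  case True
  have "(\<Sum>k\<in>{m..n}. q ^ (k - m)) = (\<Sum>i\<le>n - m. q ^ i)"
    using True by (simp add: sum.atLeastAtMost_shift_0 atLeast0AtMost comp_def)
  then show ?thesis
    using assms by (simp add: sum_gp_basic)
qed simp

lemma discounted_tail_block_le:
  fixes q L :: real and T T0 j :: nat
  assumes q: "0 \<le> q" "q < 1" and L: "0 \<le> L"
  defines "c \<equiv> \<lambda>k. if k \<in> {T0+1..T0+T} then L else 0"
  shows "discounted_tail q c (T0 + T) j \<le> L / (1 - q) * q ^ (T0 + 1 - j)"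
proof -
  define m where "m = max j (T0 + 1)"
  have "discounted_tail q c (T0 + T) j = (\<Sum>k\<in>{j..T0+T}. if k \<in> {T0+1..T0+T} then q ^ (k - j) * L else 0)"
    unfolding discounted_tail_def c_def by (intro sum.cong) auto
  also have "\<dots> = (\<Sum>k\<in>{j..T0+T} \<inter> {T0+1..T0+T}. q ^ (k - j) * L)"
    by (rule sum.inter_restrict[symmetric]) simp
  also have "{j..T0+T} \<inter> {T0+1..T0+T} = {m..T0+T}"
    by (auto simp: m_def)
  also have "(\<Sum>k\<in>{m..T0+T}. q ^ (k - j) * L) = L * q ^ (m - j) * (\<Sum>k\<in>{m..T0+T}. q ^ (k - m))"
    unfolding sum_distrib_left
    by (intro sum.cong refl) (auto simp: m_def power_add[symmetric])
  also have "\<dots> \<le> L * q ^ (m - j) / (1 - q)"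
    using mult_left_mono[OF geometric_tail_sum_le[OF q(1), of m "T0 + T"], of "L * q ^ (m - j)"] q L
    by (simp add: le_divide_eq mult_ac)
  also have "\<dots> = L / (1 - q) * q ^ (T0 + 1 - j)"
    by (simp add: m_def max_def)
  finally show ?thesis .
qed

lemma kappa_mul_geometric_sum_le:
  fixes \<kappa> :: real
  assumes "0 < \<kappa>" "\<kappa> \<le> 1"
  shows "\<kappa> * (\<Sum>j\<in>{1..N}. (1 - \<kappa>) ^ (N + 1 - j)) \<le> 1"
proof (cases "N = 0")
  case False
  have "(\<Sum>j\<in>{1..N}. (1 - \<kappa>) ^ (N + 1 - j)) = (\<Sum>i\<in>{1..N}. (1 - \<kappa>) ^ i)"
    by (subst sum.atLeastAtMost_rev) simp
  moreover have "(1 - (1 - \<kappa>)) * (\<Sum>i\<in>{1..N}. (1 - \<kappa>) ^ i) = (1 - \<kappa>) - (1 - \<kappa>) ^ Suc N"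
    using False by (subst sum_gp_multiplied) auto
  ultimately show ?thesis
    using assms by (smt (verit) mult_nonneg_nonneg zero_le_power)
qed simp

lemma sum_square_discounted_tail_block_le:
  fixes \<kappa> L :: real and T T0 :: nat
  assumes \<kappa>: "0 < \<kappa>" "\<kappa> \<le> 1" and T: "1 \<le> T" and L: "0 \<le> L"
  shows "(\<Sum>j\<in>{1..T0+T}. (discounted_tail (1 - \<kappa>) (\<lambda>k. if k \<in> {T0+1..T0+T} then L / T else 0) (T0+T) j)\<^sup>2)
    \<le> L\<^sup>2 / (\<kappa> * T) * (if T0 = 0 then 1 else 1 + 1 / (\<kappa> * T)) / \<kappa>"
proof -
  define q where "q = 1 - \<kappa>"
  define A where "A = L / (T * \<kappa>)"
  define D where "D j = discounted_tail q (\<lambda>k. if k \<in> {T0+1..T0+T} then L / T else 0) (T0+T) j" for j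
  have q: "0 \<le> q" "q < 1" "q \<le> 1"
    using \<kappa> by (auto simp: q_def)
  have D_sq: "(D j)\<^sup>2 \<le> A\<^sup>2 * q ^ (T0 + 1 - j)" for j
  proof -
    have "0 \<le> D j"
      using q L by (auto simp: D_def discounted_tail_def intro!: sum_nonneg)
    moreover have "D j \<le> A * q ^ (T0 + 1 - j)"
      using discounted_tail_block_le[OF q(1,2), of "L / T" T0 T j] L
      by (simp add: D_def A_def q_def mult.commute)
    ultimately have "(D j)\<^sup>2 \<le> A\<^sup>2 * (q ^ (T0 + 1 - j))\<^sup>2"
      by (metis power_mono power_mult_distrib)
    also have "\<dots> \<le> A\<^sup>2 * q ^ (T0 + 1 - j)"
      using mult_left_le_one_le[OF zero_le_power[OF q(1)] zero_le_power[OF q(1)] power_le_one[OF q(1,3)]]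
      by (intro mult_left_mono) (auto simp: power2_eq_square)
    finally show ?thesis .
  qed
  have "(\<Sum>j\<in>{1..T0+T}. (D j)\<^sup>2) = (\<Sum>j\<in>{1..T0}. (D j)\<^sup>2) + (\<Sum>j\<in>{T0+1..T0+T}. (D j)\<^sup>2)"
    by (rule sum.ub_add_nat) simp
  also have "\<dots> \<le> A\<^sup>2 * (\<Sum>j\<in>{1..T0}. q ^ (T0 + 1 - j)) + T * A\<^sup>2"
  proof (intro add_mono)
    show "(\<Sum>j\<in>{1..T0}. (D j)\<^sup>2) \<le> A\<^sup>2 * (\<Sum>j\<in>{1..T0}. q ^ (T0 + 1 - j))"
      unfolding sum_distrib_left by (intro sum_mono D_sq)
    have "(\<Sum>j\<in>{T0+1..T0+T}. (D j)\<^sup>2) \<le> (\<Sum>j\<in>{T0+1..T0+T}. A\<^sup>2)"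
      using D_sq by (intro sum_mono) (metis (no_types) atLeastAtMost_iff diff_is_0_eq mult.right_neutral power_0)
    then show "(\<Sum>j\<in>{T0+1..T0+T}. (D j)\<^sup>2) \<le> T * A\<^sup>2"
      by simp
  qed
  also have "\<dots> \<le> A\<^sup>2 * (if T0 = 0 then 0 else 1 / \<kappa>) + T * A\<^sup>2"
  proof -
    have "(\<Sum>j\<in>{1..T0}. q ^ (T0 + 1 - j)) \<le> (if T0 = 0 then 0 else 1 / \<kappa>)"
      using kappa_mul_geometric_sum_le[OF \<kappa>, of T0] \<kappa> by (simp add: q_def field_simps)
    then show ?thesis
      by (simp add: mult_left_mono)
  qed
  also have "\<dots> = L\<^sup>2 / (\<kappa> * T) * (if T0 = 0 then 1 else 1 + 1 / (\<kappa> * T)) / \<kappa>"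
    using \<kappa> T by (simp add: A_def power2_eq_square field_simps)
  finally show ?thesis
    by (simp add: D_def q_def)
qed

locale W1_contracting_kernel = markov_kernel K for K :: "'a::metric_space \<Rightarrow> 'a measure" +
  fixes \<kappa> :: real
  assumes first_moment: "\<And>y. (\<integral>\<^sup>+z. ennreal (dist y z) \<partial>K y) < \<top>"
    and contraction: "\<And>y z. enn2ereal (W1 (K y) (K z)) \<le> ereal ((1 - \<kappa>) * dist y z)"
begin

lemma contraction_nonneg: "0 \<le> (1 - \<kappa>) * dist y z" for y z :: 'a
  using order.trans[OF enn2ereal_nonneg contraction[of y z]] by simp

lemma W1_le: "W1 (K y) (K z) \<le> ennreal ((1 - \<kappa>) * dist y z)"
  using contraction[of y z] contraction_nonneg[of y z]
  by (simp add: less_eq_ennreal.rep_eq enn2ereal_ennreal)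

lemma coarse_sigma2_eq_0_if_kappa_gt_1:
  assumes "1 < \<kappa>"
  shows "coarse_sigma2 K y = 0"
proof -
  have dist_0: "dist a b = 0" for a b :: 'a
    using contraction_nonneg[of a b] assms by (simp add: zero_le_mult_iff)
  show ?thesis
    by (simp add: coarse_sigma2_def dsq_def dist_0)
qed

lemma lipschitz_on_kernel_integral:
  fixes h :: "'a \<Rightarrow> real"
  assumes h: "C-lipschitz_on UNIV h"
  shows "(C * max 0 (1 - \<kappa>))-lipschitz_on UNIV (\<lambda>y. \<integral>w. h w \<partial>K y)"
proof (rule lipschitz_onI)
  show "0 \<le> C * max 0 (1 - \<kappa>)"
    using lipschitz_on_nonneg[OF h] by simp
  fix y z
  have int: "integrable (K y) g" if "D-lipschitz_on UNIV g" for g :: "'a \<Rightarrow> real" and D y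
    using metric_prob_space.lipschitz_integrable[OF metric_prob_space_K that first_moment] .
  have "\<bar>(\<integral>w. h w \<partial>K y) - (\<integral>w. h w \<partial>K z)\<bar> \<le> C * ((1 - \<kappa>) * dist y z)"
  proof (cases "C = 0")
    case True
    define c where "c = h y"
    have "h = (\<lambda>_. c)"
      using lipschitz_onD[OF h, of _ y] True by (auto simp: c_def)
    then show ?thesis
      using True prob_space.prob_space[OF metric_prob_space.axioms(1)[OF metric_prob_space_K]]
      by simp
  next
    case False
    then have C: "0 < C"
      using lipschitz_on_nonneg[OF h] by simp
    have h1: "1-lipschitz_on UNIV (\<lambda>w. h w / C)"
      using lipschitz_on_cmult_real_nonneg[OF h, of "1 / C"] C by simp
    have "ennreal \<bar>(\<integral>w. h w / C \<partial>K y) - (\<integral>w. h w / C \<partial>K z)\<bar> \<le> ennreal ((1 - \<kappa>) * dist y z)"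
      using integral_diff_le_W1[OF h1 int[OF h1] int[OF h1]] W1_le by (rule order.trans)
    then have "\<bar>(\<integral>w. h w \<partial>K y) - (\<integral>w. h w \<partial>K z)\<bar> / C \<le> (1 - \<kappa>) * dist y z"
      using C contraction_nonneg by (simp add: diff_divide_distrib[symmetric])
    then show ?thesis
      using C by (simp add: field_simps)
  qed
  also have "\<dots> \<le> C * max 0 (1 - \<kappa>) * dist y z"
    using lipschitz_on_nonneg[OF h] by (simp add: mult_left_mono mult_right_mono mult.assoc)
  finally show "dist (\<integral>w. h w \<partial>K y) (\<integral>w. h w \<partial>K z) \<le> C * max 0 (1 - \<kappa>) * dist y z"
    by (simp add: dist_real_def)
qed

lemma nn_integral_path_Suc_square_le:
  fixes g :: "nat \<Rightarrow> 'a \<Rightarrow> real" and c :: "nat \<Rightarrow> real"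
  assumes sigma: "\<And>y. coarse_sigma2 K y < \<top>" and lip: "\<forall>k\<le>Suc n. (c k)-lipschitz_on UNIV (g k)"
  shows "(\<integral>\<^sup>+\<omega>. ennreal (((\<Sum>k\<le>Suc n. g k (\<omega> k)) - a)\<^sup>2) \<partial>path K x (Suc n))
    \<le> (\<integral>\<^sup>+\<omega>. ennreal (((\<Sum>k\<le>n. g k (\<omega> k)) + (\<integral>y. g (Suc n) y \<partial>K (\<omega> n)) - a)\<^sup>2) \<partial>path K x n)
      + ennreal ((c (Suc n))\<^sup>2) * (SUP y. coarse_sigma2 K y / local_dim K y)"
proof -
  define S where "S = (SUP y. coarse_sigma2 K y / local_dim K y)"
  have lip_Suc: "(c (Suc n))-lipschitz_on UNIV (g (Suc n))"
    using lip by auto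
  have [measurable]: "(\<lambda>\<omega>. \<Sum>k\<le>Suc n. g k (\<omega> k)) \<in> borel_measurable (PiM {0..Suc n} (\<lambda>_. borel))"
    by (rule path_sum_measurable[OF lip])
  have F: "(\<lambda>\<omega>. ennreal (((\<Sum>k\<le>Suc n. g k (\<omega> k)) - a)\<^sup>2)) \<in> borel_measurable (PiM {0..Suc n} (\<lambda>_. borel))"
    by measurable
  have extend_sum: "(\<Sum>k\<le>n. g k (((restrict \<omega> {0..n})(Suc n := y)) k)) = (\<Sum>k\<le>n. g k (\<omega> k))"
    for \<omega> :: "nat \<Rightarrow> 'a" and y
    by (intro sum.cong) auto
  have "(\<lambda>\<omega>. \<Sum>k\<le>n. g k (\<omega> k)) \<in> borel_measurable (PiM {0..n} (\<lambda>_. borel))"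
    using lip by (intro path_sum_measurable[of _ c]) auto
  then have [measurable]: "(\<lambda>\<omega>. \<Sum>k\<le>n. g k (\<omega> k)) \<in> borel_measurable (path K x n)"
    using measurable_cong_sets[OF sets_path refl] by blast
  have "(\<lambda>\<omega>. \<integral>y. g (Suc n) y \<partial>K (\<omega> n)) \<in> borel_measurable (PiM {0..n} (\<lambda>_. borel))"
    using measurable_compose[OF measurable_component_singleton[of n "{0..n}"]
        lipschitz_on_borel_measurable[OF lipschitz_on_kernel_integral[OF lip_Suc]]]
    by simp
  then have [measurable]: "(\<lambda>\<omega>. \<integral>y. g (Suc n) y \<partial>K (\<omega> n)) \<in> borel_measurable (path K x n)"
    using measurable_cong_sets[OF sets_path refl] by blast
  have "(\<integral>\<^sup>+\<omega>. ennreal (((\<Sum>k\<le>Suc n. g k (\<omega> k)) - a)\<^sup>2) \<partial>path K x (Suc n))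
      = (\<integral>\<^sup>+\<omega>. \<integral>\<^sup>+y. ennreal ((((\<Sum>k\<le>n. g k (\<omega> k)) - a) + g (Suc n) y)\<^sup>2) \<partial>K (\<omega> n) \<partial>path K x n)"
    unfolding nn_integral_path_Suc[OF F] by (simp add: extend_sum algebra_simps)
  also have "\<dots> \<le> (\<integral>\<^sup>+\<omega>. ennreal (((\<Sum>k\<le>n. g k (\<omega> k)) + (\<integral>y. g (Suc n) y \<partial>K (\<omega> n)) - a)\<^sup>2)
      + ennreal ((c (Suc n))\<^sup>2) * S \<partial>path K x n)"
  proof (intro nn_integral_mono order.trans[OF nn_integral_square_shift_le[OF lip_Suc sigma]])
    fix \<omega> :: "nat \<Rightarrow> 'a"
    have "coarse_sigma2 K (\<omega> n) / local_dim K (\<omega> n) \<le> S"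
      unfolding S_def by (rule SUP_upper) simp
    from mult_left_mono[OF this, of "ennreal ((c (Suc n))\<^sup>2)"]
    show "ennreal ((((\<Sum>k\<le>n. g k (\<omega> k)) - a) + (\<integral>y. g (Suc n) y \<partial>K (\<omega> n)))\<^sup>2)
        + ennreal ((c (Suc n))\<^sup>2) * (coarse_sigma2 K (\<omega> n) / local_dim K (\<omega> n))
      \<le> ennreal (((\<Sum>k\<le>n. g k (\<omega> k)) + (\<integral>y. g (Suc n) y \<partial>K (\<omega> n)) - a)\<^sup>2)
        + ennreal ((c (Suc n))\<^sup>2) * S"
      by (simp add: algebra_simps)
  qed
  also have "\<dots> = (\<integral>\<^sup>+\<omega>. ennreal (((\<Sum>k\<le>n. g k (\<omega> k)) + (\<integral>y. g (Suc n) y \<partial>K (\<omega> n)) - a)\<^sup>2)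
      \<partial>path K x n) + ennreal ((c (Suc n))\<^sup>2) * S"
    by (simp add: nn_integral_add prob_space.emeasure_space_1[OF prob_space_path])
  finally show ?thesis
    unfolding S_def .
qed

text \<open>
  The induction folds the one-step average of the last function into the previous one, so the
  coefficients c are replaced by c(n := c n + q * c (Suc n)), which is how the discounted tails
  arise.
\<close>

lemma path_sum_square_deviation_le:
  fixes g :: "nat \<Rightarrow> 'a \<Rightarrow> real" and c :: "nat \<Rightarrow> real"
  assumes sigma: "\<And>y. coarse_sigma2 K y < \<top>" and lip: "\<forall>k\<le>n. (c k)-lipschitz_on UNIV (g k)"
  shows "\<exists>a. (\<integral>\<^sup>+\<omega>. ennreal (((\<Sum>k\<le>n. g k (\<omega> k)) - a)\<^sup>2) \<partial>path K x n)
    \<le> (SUP y. coarse_sigma2 K y / local_dim K y)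
      * ennreal (\<Sum>j\<in>{1..n}. (discounted_tail (max 0 (1 - \<kappa>)) c n j)\<^sup>2)"
  using lip
proof (induction n arbitrary: g c)
  case 0
  have [measurable]: "(\<lambda>\<omega>. g 0 (\<omega> 0)) \<in> borel_measurable (PiM {0::nat} (\<lambda>_. borel))"
    using path_sum_measurable[OF "0.prems"] by simp
  have "(\<lambda>\<omega>. ennreal ((g 0 (\<omega> 0) - g 0 x)\<^sup>2)) \<in> borel_measurable (PiM {0::nat} (\<lambda>_. borel))"
    by measurable
  then have "(\<integral>\<^sup>+\<omega>. ennreal (((\<Sum>k\<le>0. g k (\<omega> k)) - g 0 x)\<^sup>2) \<partial>path K x 0) = 0"
    by (simp add: nn_integral_return space_PiM)
  then show ?case
    by (intro exI[of _ "g 0 x"]) simp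
next
  case (Suc n)
  define q where "q = max 0 (1 - \<kappa>)"
  define S where "S = (SUP y. coarse_sigma2 K y / local_dim K y)"
  define g' where "g' = g(n := (\<lambda>z. g n z + (\<integral>w. g (Suc n) w \<partial>K z)))"
  define c' where "c' = c(n := c n + q * c (Suc n))"
  have "(c n + c (Suc n) * q)-lipschitz_on UNIV (\<lambda>z. g n z + (\<integral>w. g (Suc n) w \<partial>K z))"
    using Suc.prems lipschitz_on_kernel_integral[of "c (Suc n)" "g (Suc n)"] unfolding q_def
    by (intro lipschitz_on_add) auto
  then have lip': "\<forall>k\<le>n. (c' k)-lipschitz_on UNIV (g' k)"
    using Suc.prems by (simp add: g'_def c'_def mult.commute)
  obtain a where a: "(\<integral>\<^sup>+\<omega>. ennreal (((\<Sum>k\<le>n. g' k (\<omega> k)) - a)\<^sup>2) \<partial>path K x n)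
      \<le> S * ennreal (\<Sum>j\<in>{1..n}. (discounted_tail q c' n j)\<^sup>2)"
    using Suc.IH[OF lip'] unfolding q_def S_def by blast
  have sum_g': "(\<Sum>k\<le>n. g' k (\<omega> k)) = (\<Sum>k\<le>n. g k (\<omega> k)) + (\<integral>y. g (Suc n) y \<partial>K (\<omega> n))" for \<omega>
  proof -
    have "(\<Sum>k\<le>n. g' k (\<omega> k))
        = (\<Sum>k\<le>n. g k (\<omega> k) + (if k = n then \<integral>y. g (Suc n) y \<partial>K (\<omega> n) else 0))"
      by (intro sum.cong) (auto simp: g'_def)
    then show ?thesis
      by (simp add: sum.distrib)
  qed
  have "(\<integral>\<^sup>+\<omega>. ennreal (((\<Sum>k\<le>Suc n. g k (\<omega> k)) - a)\<^sup>2) \<partial>path K x (Suc n))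
      \<le> (\<integral>\<^sup>+\<omega>. ennreal (((\<Sum>k\<le>n. g' k (\<omega> k)) - a)\<^sup>2) \<partial>path K x n) + ennreal ((c (Suc n))\<^sup>2) * S"
    using nn_integral_path_Suc_square_le[OF sigma Suc.prems] by (simp add: sum_g' S_def)
  also have "\<dots> \<le> S * ennreal (\<Sum>j\<in>{1..n}. (discounted_tail q c' n j)\<^sup>2) + ennreal ((c (Suc n))\<^sup>2) * S"
    by (rule add_right_mono[OF a])
  also have "\<dots> = S * ennreal (\<Sum>j\<in>{1..Suc n}. (discounted_tail q c (Suc n) j)\<^sup>2)"
  proof -
    have "(\<Sum>j\<in>{1..n}. (discounted_tail q c' n j)\<^sup>2) = (\<Sum>j\<in>{1..n}. (discounted_tail q c (Suc n) j)\<^sup>2)"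
      by (intro sum.cong refl) (simp add: c'_def discounted_tail_Suc)
    moreover have "(\<Sum>j\<in>{1..Suc n}. (discounted_tail q c (Suc n) j)\<^sup>2)
        = (\<Sum>j\<in>{1..n}. (discounted_tail q c (Suc n) j)\<^sup>2) + (c (Suc n))\<^sup>2"
      by (simp add: sum.cl_ivl_Suc discounted_tail_def)
    ultimately show ?thesis
      by (simp add: ennreal_plus sum_nonneg distrib_left mult.commute)
  qed
  finally show ?case
    unfolding q_def S_def by blast
qed

lemma var_path_sum_le:
  fixes g :: "nat \<Rightarrow> 'a \<Rightarrow> real" and c :: "nat \<Rightarrow> real"
  assumes sigma: "\<And>y. coarse_sigma2 K y < \<top>" and lip: "\<forall>k\<le>n. (c k)-lipschitz_on UNIV (g k)"
  shows "ennreal (var (path K x n) (\<lambda>\<omega>. \<Sum>k\<le>n. g k (\<omega> k)))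
    \<le> (SUP y. coarse_sigma2 K y / local_dim K y)
      * ennreal (\<Sum>j\<in>{1..n}. (discounted_tail (max 0 (1 - \<kappa>)) c n j)\<^sup>2)"
proof -
  obtain a where "(\<integral>\<^sup>+\<omega>. ennreal (((\<Sum>k\<le>n. g k (\<omega> k)) - a)\<^sup>2) \<partial>path K x n)
    \<le> (SUP y. coarse_sigma2 K y / local_dim K y)
      * ennreal (\<Sum>j\<in>{1..n}. (discounted_tail (max 0 (1 - \<kappa>)) c n j)\<^sup>2)"
    using path_sum_square_deviation_le[OF sigma lip] by blast
  moreover have "(\<lambda>\<omega>. \<Sum>k\<le>n. g k (\<omega> k)) \<in> borel_measurable (path K x n)"
    using path_sum_measurable[OF lip] measurable_cong_sets[OF sets_path refl] by blast
  ultimately show ?thesis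
    using prob_space.var_le_nn_integral_square[OF prob_space_path] order.trans by blast
qed

lemma var_path_average_le:
  fixes f :: "'a \<Rightarrow> real"
  assumes sigma: "\<And>y. coarse_sigma2 K y < \<top>" and f: "L-lipschitz_on UNIV f" and T: "1 \<le> T"
  shows "ennreal (var (path K x (T0 + T)) (\<lambda>\<omega>. (1 / real T) * (\<Sum>k\<in>{T0+1..T0+T}. f (\<omega> k))))
    \<le> (SUP y. coarse_sigma2 K y / local_dim K y)
      * ennreal (\<Sum>j\<in>{1..T0+T}. (discounted_tail (max 0 (1 - \<kappa>))
          (\<lambda>k. if k \<in> {T0+1..T0+T} then L / T else 0) (T0 + T) j)\<^sup>2)"
proof -
  define a where "a k = (if k \<in> {T0+1..T0+T} then 1 / real T else 0)" for k
  have lip: "\<forall>k\<le>T0+T. (\<bar>a k\<bar> * L)-lipschitz_on UNIV (\<lambda>z. a k * f z)"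
    using lipschitz_on_cmult_real[OF f] by blast
  have "(\<Sum>k\<le>T0+T. a k * f (\<omega> k)) = (1 / real T) * (\<Sum>k\<in>{T0+1..T0+T}. f (\<omega> k))" for \<omega>
  proof -
    have "(\<Sum>k\<le>T0+T. a k * f (\<omega> k)) = (\<Sum>k\<in>{..T0+T} \<inter> {T0+1..T0+T}. f (\<omega> k) / T)"
      unfolding a_def sum.inter_restrict[OF finite_atMost] by (intro sum.cong) auto
    also have "{..T0+T} \<inter> {T0+1..T0+T} = {T0+1..T0+T}"
      by auto
    finally show ?thesis
      by (simp add: sum_divide_distrib)
  qed
  moreover have "(\<lambda>k. \<bar>a k\<bar> * L) = (\<lambda>k. if k \<in> {T0+1..T0+T} then L / T else 0)"
    by (auto simp: a_def)
  ultimately show ?thesis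
    using var_path_sum_le[OF sigma lip, of x] by simp
qed

end

theorem theorem2:
  fixes K :: "'a::polish_space \<Rightarrow> 'a measure"
    and \<kappa> :: real and T T0 :: nat and f :: "'a \<Rightarrow> real" and x :: 'a
  assumes K_meas: "K \<in> borel \<rightarrow>\<^sub>M prob_algebra borel"
    and first_moment: "\<And>y. (\<integral>\<^sup>+ z. ennreal (dist y z) \<partial>K y) < \<top>"
    and kappa_pos: "\<kappa> > 0"
    and contraction: "\<And>y z. enn2ereal (W1 (K y) (K z)) \<le> ereal ((1 - \<kappa>) * dist y z)"
    and T_ge: "T \<ge> 1"
    and sup_fin: "(SUP y. coarse_sigma2 K y / local_dim K y) < \<top>"
    and sigma_fin: "\<And>y. coarse_sigma2 K y < \<top>"
    and f_lip: "\<exists>C. C-lipschitz_on UNIV f"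
  shows "ennreal (var (path K x (T0 + T))
            (\<lambda>\<omega>. (1 / real T) * (\<Sum>k\<in>{T0+1..T0+T}. f (\<omega> k))))
         \<le> ennreal ((lip_norm f)\<^sup>2 / (\<kappa> * real T)
                    * (if T0 = 0 then 1 else 1 + 1 / (\<kappa> * real T)) / \<kappa>)
           * (SUP y. coarse_sigma2 K y / local_dim K y)"
proof -
  interpret W1_contracting_kernel K \<kappa>
    using K_meas first_moment contraction by unfold_locales
  define S where "S = (SUP y. coarse_sigma2 K y / local_dim K y)"
  define B where "B = (lip_norm f)\<^sup>2 / (\<kappa> * real T) * (if T0 = 0 then 1 else 1 + 1 / (\<kappa> * real T)) / \<kappa>"
  define L where "L = \<bar>lip_norm f\<bar>"
  have f: "L-lipschitz_on UNIV f"
    using f_lip lipschitz_on_lip_norm unfolding L_def by blast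
  note var_bound = var_path_average_le[OF sigma_fin f T_ge, of x T0, folded S_def]
  show ?thesis
  proof (cases "\<kappa> \<le> 1")
    case True
    have sum_bound: "(\<Sum>j\<in>{1..T0+T}. (discounted_tail (max 0 (1 - \<kappa>))
        (\<lambda>k. if k \<in> {T0+1..T0+T} then L / T else 0) (T0 + T) j)\<^sup>2) \<le> B"
      using sum_square_discounted_tail_block_le[OF kappa_pos True T_ge, of L T0] True
      by (simp add: L_def B_def)
    from order.trans[OF var_bound mult_left_mono[OF ennreal_leI[OF sum_bound] zero_le]]
    show ?thesis
      unfolding S_def B_def by (simp only: mult.commute)
  next
    case False
    then have "S = 0"
      by (simp add: S_def coarse_sigma2_eq_0_if_kappa_gt_1)
    with var_bound show ?thesis
      by (simp add: S_def)
  qed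
qed

end
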